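(* Let $\Phi(L,W,S,B)$ with $L\le c_1$, $2\le W\le c_2N$, $S\le c_2N$, $1\le B\le c_2N$ for constants $c_1,c_2$ and $N$ sufficiently large, and let $\nabla\Phi(L,W,S,B)=\{x\mapsto\|\nabla F(x)\|:F\in\Phi(L,W,S,B)\}$. Then there is a constant $C$ depending only on $d,c_1$ such that for all $\delta\in(0,1)$ $$\log\mathcal N\big(\delta,\nabla\Phi(L,W,S,B),\|\cdot\|_\infty\big)\le C\,S\big[\log(\delta^{-1})+3^L\log(WB)\big],$$ where $\|g\|_\infty=\sup_{x\in\Omega}|g(x)|$.
   Context: $\Omega=[0,1]^d$. For integers $L,W,S\ge1$ and $B>0$, $\Phi(L,W,S,B)$ is the set of functions $F:\mathbb R^d\to\mathbb R$ of the form $F=(\mathcal W^{(L)}\eta_3(\cdot)+b^{(L)})\circ\cdots\circ(\mathcal W^{(2)}\eta_3(\cdot)+b^{(2)})\circ(\mathcal W^{(1)}x+b^{(1)})$, where $\eta_3(t)=\max\{t,0\}^3$ acts componentwise, $\mathcal W^{(1)}\in\mathbb R^{W\times d}$, $b^{(1)}\in\mathbb R^W$, $\mathcal W^{(l)}\in\mathbb R^{W\times W}$, $b^{(l)}\in\mathbb R^W$ for $1<l<L$, $\mathcal W^{(L)}\in\mathbb R^{1\times W}$, $b^{(L)}\in\mathbb R$, the total number of nonzero entries of all $\mathcal W^{(l)},b^{(l)}$ is at most $S$, and all entries have absolute value at most $B$. $\|\nabla F(x)\|$ is the Euclidean norm of the gradient. $\mathcal N(\delta,A,\|\cdot\|)$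 is the minimal number of $\|\cdot\|$-balls of radius $\delta$ centered in $A$ needed to cover $A$. *)

theory Defs
  imports "HOL-Analysis.Analysis" "HOL-Library.Extended_Nat"
begin

definition eta3 :: "real \<Rightarrow> real" where
  "eta3 t = (max t 0) ^ 3"

definition rows :: "nat \<Rightarrow> nat \<Rightarrow> nat \<Rightarrow> nat" where
  "rows L W l = (if l = L then 1 else W)"

text \<open>Pre-activation values of layer l (l \<ge> 1) at input x.
  A i is row i of the first weight matrix W^(1); M l i j is entry (i,j) of W^(l) for l \<ge> 2;
  b l i is entry i of b^(l).\<close>
fun layer_val :: "nat \<Rightarrow> (nat \<Rightarrow> real^'d) \<Rightarrow> (nat \<Rightarrow> nat \<Rightarrow> nat \<Rightarrow> real)
    \<Rightarrow> (nat \<Rightarrow> nat \<Rightarrow> real) \<Rightarrow> nat \<Rightarrow> real^'d \<Rightarrow> nat \<Rightarrow> real" where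
  "layer_val W A M b 0 x i = 0"
| "layer_val W A M b (Suc 0) x i = A i \<bullet> x + b 1 i"
| "layer_val W A M b (Suc (Suc l)) x i =
     (\<Sum>j<W. M (Suc (Suc l)) i j * eta3 (layer_val W A M b (Suc l) x j)) + b (Suc (Suc l)) i"

definition nnz :: "nat \<Rightarrow> nat \<Rightarrow> (nat \<Rightarrow> real^'d) \<Rightarrow> (nat \<Rightarrow> nat \<Rightarrow> nat \<Rightarrow> real)
    \<Rightarrow> (nat \<Rightarrow> nat \<Rightarrow> real) \<Rightarrow> nat" where
  "nnz L W A M b =
     card {(i, j). i < rows L W 1 \<and> A i $ j \<noteq> 0}
     + (\<Sum>l\<in>{2..L}. card {(i, j). i < rows L W l \<and> j < W \<and> M l i j \<noteq> 0})
     + (\<Sum>l\<in>{1..L}. card {i. i < rows L W l \<and> b l i \<noteq> 0})"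

definition Phi :: "nat \<Rightarrow> nat \<Rightarrow> nat \<Rightarrow> real \<Rightarrow> (real^'d \<Rightarrow> real) set" where
  "Phi L W S B = {F. \<exists>A M b.
      (\<forall>i < rows L W 1. \<forall>j. \<bar>A i $ j\<bar> \<le> B)
    \<and> (\<forall>l\<in>{2..L}. \<forall>i < rows L W l. \<forall>j < W. \<bar>M l i j\<bar> \<le> B)
    \<and> (\<forall>l\<in>{1..L}. \<forall>i < rows L W l. \<bar>b l i\<bar> \<le> B)
    \<and> nnz L W A M b \<le> S
    \<and> F = (\<lambda>x. layer_val W A M b L x 0)}"

definition grad :: "(real^'d \<Rightarrow> real) \<Rightarrow> real^'d \<Rightarrow> real^'d" where
  "grad F x = (\<chi> i. frechet_derivative F (at x) (axis i 1))"

definition gradPhi :: "nat \<Rightarrow> nat \<Rightarrow> nat \<Rightarrow> real \<Rightarrow> (real^'d \<Rightarrow> real) set" where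
  "gradPhi L W S B = (\<lambda>F x. norm (grad F x)) ` Phi L W S B"

definition Omega :: "(real^'d) set" where
  "Omega = {x. \<forall>i. 0 \<le> x $ i \<and> x $ i \<le> 1}"

definition sup_dist :: "(real^'d \<Rightarrow> real) \<Rightarrow> (real^'d \<Rightarrow> real) \<Rightarrow> real" where
  "sup_dist g h = (SUP x\<in>Omega. \<bar>g x - h x\<bar>)"

text \<open>Covering number: minimal number of (closed) balls of radius delta centered in A
  covering A (infinity if no finite cover exists).\<close>
definition covering_number :: "real \<Rightarrow> 'a set \<Rightarrow> ('a \<Rightarrow> 'a \<Rightarrow> real) \<Rightarrow> enat" where
  "covering_number \<delta> A d = Inf {enat (card T) | T. finite T \<and> T \<subseteq> A \<and>
      (\<forall>g\<in>A. \<exists>t\<in>T. d g t \<le> \<delta>)}"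

end

theory Submission
  imports Defs
begin

text \<open>
  Attach to each neuron its jet, the pair (value, gradient). Since eta3 is cubic with
  derivative 3 max(t,0)^2, on [-s, s] it is bounded by s^3 and Lipschitz with constant
  3 s^2, and its derivative is bounded by 3 s^2 and Lipschitz with constant 6 s. By
  induction over the layers, if the weights of two networks are bounded by B and differ
  by at most \<epsilon>, then on [0,1]^d their jets at layer l are bounded by s_l and differ by
  at most s_l \<epsilon>, where s_{l+1} = Q s_l^3 with Q of order d W B; hence s_L \<le> Q^(3^L).
  Rounding every nonzero weight of a network in Phi(L,W,S,B) to the grid \<epsilon> \<int> \<inter> [-B, B]
  with \<epsilon> = \<delta> / s_L therefore moves the gradient norm by at most \<delta> in sup norm.
  The rounded networks have at most S nonzero weights among O(W^2 (d + L)) positions,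
  each taking O(B s_L / \<delta>) values, so there are at most (W^2 B s_L / \<delta>)^O(S) of them;
  taking logarithms gives the bound S (log(1/\<delta>) + 3^L log(W B)) up to a constant.
\<close>

definition deta3 :: "real \<Rightarrow> real" where
  "deta3 t = 3 * (max t 0) ^ 2"

lemma eta3_has_real_derivative: "(eta3 has_real_derivative deta3 t) (at t)"
proof (cases t "0::real" rule: linorder_cases)
  case less
  have "((\<lambda>_. 0) has_real_derivative deta3 t) (at t)"
    using less by (auto intro!: derivative_eq_intros simp: deta3_def)
  then show ?thesis
    by (rule has_field_derivative_transform_within_open[of _ _ _ "{..<0}"])
       (use less in \<open>auto simp: eta3_def\<close>)
next
  case greater
  have "((\<lambda>y. y ^ 3) has_real_derivative deta3 t) (at t)"
    using greater by (auto intro!: derivative_eq_intros simp: deta3_def)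
  then show ?thesis
    by (rule has_field_derivative_transform_within_open[of _ _ _ "{0<..}"])
       (use greater in \<open>auto simp: eta3_def\<close>)
next
  case equal
  have "isCont (\<lambda>y::real. ((y + \<bar>y\<bar>) / 2) ^ 2) 0"
    by (intro continuous_intros) auto
  moreover have "(\<lambda>y::real. ((y + \<bar>y\<bar>) / 2) ^ 2) = (\<lambda>y. (max y 0) ^ 2)"
    by (auto simp: max_def fun_eq_iff)
  ultimately have "((\<lambda>y::real. (max y 0) ^ 2) \<longlongrightarrow> 0) (at 0)"
    by (simp add: isCont_def)
  moreover have "(eta3 y - eta3 0) / (y - 0) = (max y 0) ^ 2" if "y \<noteq> 0" for y
    using that by (auto simp: eta3_def power3_eq_cube power2_eq_square max_def)
  ultimately have "((\<lambda>y. (eta3 y - eta3 0) / (y - 0)) \<longlongrightarrow> deta3 0) (at 0)"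
    using LIM_equal[of 0 "\<lambda>y. (eta3 y - eta3 0) / (y - 0)" "\<lambda>y. (max y 0) ^ 2" 0]
    by (simp add: deta3_def)
  then show ?thesis
    unfolding equal by (rule has_field_derivative_iff[THEN iffD2])
qed

section \<open>Gradients of networks\<close>

fun layer_grad :: "nat \<Rightarrow> (nat \<Rightarrow> real^'d) \<Rightarrow> (nat \<Rightarrow> nat \<Rightarrow> nat \<Rightarrow> real)
    \<Rightarrow> (nat \<Rightarrow> nat \<Rightarrow> real) \<Rightarrow> nat \<Rightarrow> real^'d \<Rightarrow> nat \<Rightarrow> real^'d" where
  "layer_grad W A M b 0 x i = 0"
| "layer_grad W A M b (Suc 0) x i = A i"
| "layer_grad W A M b (Suc (Suc l)) x i =
     (\<Sum>j<W. (M (Suc (Suc l)) i j * deta3 (layer_val W A M b (Suc l) x j)) *\<^sub>R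
        layer_grad W A M b (Suc l) x j)"

lemma layer_val_has_derivative:
  "((\<lambda>x. layer_val W A M b (Suc l) x i) has_derivative
     (\<lambda>h. layer_grad W A M b (Suc l) x i \<bullet> h)) (at x)"
proof (induction l arbitrary: i)
  case 0
  show ?case by (auto intro!: derivative_eq_intros)
next
  case (Suc l)
  have "((\<lambda>x. eta3 (layer_val W A M b (Suc l) x j)) has_derivative
      (\<lambda>h. deta3 (layer_val W A M b (Suc l) x j) * (layer_grad W A M b (Suc l) x j \<bullet> h))) (at x)"
    for j
    using has_derivative_compose[OF Suc.IH eta3_has_real_derivative[unfolded has_field_derivative_def]]
    by (simp add: mult.commute)
  then show ?case
    by (auto intro!: derivative_eq_intros has_derivative_sum
        simp: inner_sum_left algebra_simps)
qed

lemma grad_layer_val: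
  "grad (\<lambda>x. layer_val W A M b (Suc l) x i) x = layer_grad W A M b (Suc l) x i"
  unfolding grad_def frechet_derivative_at[OF layer_val_has_derivative, symmetric]
  by (simp add: vec_eq_iff inner_axis)

section \<open>Perturbation of network jets\<close>

lemma max_0_diff_le: "\<bar>max a 0 - max b 0\<bar> \<le> \<bar>a - b\<bar>" for a b :: real
  by (simp add: max_def abs_if)

lemma abs_eta3_le: "\<bar>a\<bar> \<le> s \<Longrightarrow> \<bar>eta3 a\<bar> \<le> s ^ 3"
  unfolding eta3_def by (simp add: power_mono abs_le_iff)

lemma deta3_nonneg: "0 \<le> deta3 a"
  by (simp add: deta3_def)

lemma deta3_le: "\<bar>a\<bar> \<le> s \<Longrightarrow> deta3 a \<le> 3 * s ^ 2"
  unfolding deta3_def by (simp add: power_mono abs_le_iff)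

lemma eta3_lipschitz:
  assumes "\<bar>a\<bar> \<le> s" "\<bar>b\<bar> \<le> s"
  shows "\<bar>eta3 a - eta3 b\<bar> \<le> 3 * s ^ 2 * \<bar>a - b\<bar>"
proof -
  define p q where "p = max a 0" and "q = max b 0"
  have pq: "0 \<le> p" "p \<le> s" "0 \<le> q" "q \<le> s" "\<bar>p - q\<bar> \<le> \<bar>a - b\<bar>"
    using assms max_0_diff_le[of a b] by (auto simp: p_def q_def)
  have "p ^ 2 + p * q + q ^ 2 \<le> 3 * s ^ 2"
    using pq mult_mono[of p s q s] power_mono[of p s 2] power_mono[of q s 2]
    by (simp add: power2_eq_square)
  moreover have "eta3 a - eta3 b = (p - q) * (p ^ 2 + p * q + q ^ 2)"
    by (simp add: eta3_def p_def[symmetric] q_def[symmetric]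
        power2_eq_square power3_eq_cube algebra_simps)
  then have "\<bar>eta3 a - eta3 b\<bar> = \<bar>p - q\<bar> * (p ^ 2 + p * q + q ^ 2)"
    using pq by (simp add: abs_mult)
  ultimately show ?thesis
    using pq by (simp add: mult.commute mult_mono)
qed

lemma deta3_lipschitz:
  assumes "\<bar>a\<bar> \<le> s" "\<bar>b\<bar> \<le> s"
  shows "\<bar>deta3 a - deta3 b\<bar> \<le> 6 * s * \<bar>a - b\<bar>"
proof -
  define p q where "p = max a 0" and "q = max b 0"
  have pq: "0 \<le> p" "p \<le> s" "0 \<le> q" "q \<le> s" "\<bar>p - q\<bar> \<le> \<bar>a - b\<bar>"
    using assms max_0_diff_le[of a b] by (auto simp: p_def q_def)
  have "deta3 a - deta3 b = 3 * ((p - q) * (p + q))"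
    by (simp add: deta3_def p_def[symmetric] q_def[symmetric] power2_eq_square algebra_simps)
  then have "\<bar>deta3 a - deta3 b\<bar> = 3 * (\<bar>p - q\<bar> * (p + q))"
    using pq by (simp add: abs_mult)
  also have "\<dots> \<le> 3 * (\<bar>a - b\<bar> * (2 * s))"
    using pq by (intro mult_left_mono mult_mono) auto
  finally show ?thesis by (simp add: algebra_simps)
qed

text \<open>The jets (v, g) and (v', g') of one neuron in two networks whose weights are close.\<close>

definition jet_close :: "real \<Rightarrow> real \<Rightarrow> real \<Rightarrow> 'a::real_normed_vector \<Rightarrow> real \<Rightarrow> 'a \<Rightarrow> bool" where
  "jet_close s \<epsilon> v g v' g' \<longleftrightarrow>
     \<bar>v\<bar> \<le> s \<and> \<bar>v'\<bar> \<le> s \<and> norm g \<le> s \<and> norm g' \<le> s \<and> \<bar>v - v'\<bar> \<le> s * \<epsilon> \<and> norm (g - g') \<le> s * \<epsilon>"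

lemma jet_close_mono:
  "jet_close s \<epsilon> v g v' g' \<Longrightarrow> s \<le> t \<Longrightarrow> 0 \<le> \<epsilon> \<Longrightarrow> jet_close t \<epsilon> v g v' g'"
  unfolding jet_close_def by (smt (verit) mult_right_mono)

lemma jet_close_add:
  assumes "jet_close s \<epsilon> v g v' g'" "jet_close t \<epsilon> w h w' h'"
  shows "jet_close (s + t) \<epsilon> (v + w) (g + h) (v' + w') (g' + h')"
proof -
  have "norm (g + h - (g' + h')) \<le> norm (g - g') + norm (h - h')"
    by (metis add_diff_add norm_triangle_ineq)
  then show ?thesis
    using assms unfolding jet_close_def
    by (smt (verit, best) distrib_right norm_triangle_ineq)
qed

lemma jet_close_sum:
  assumes "finite J" "\<And>j. j \<in> J \<Longrightarrow> jet_close (s j) \<epsilon> (v j) (g j) (v' j) (g' j)"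
  shows "jet_close (\<Sum>j\<in>J. s j) \<epsilon> (\<Sum>j\<in>J. v j) (\<Sum>j\<in>J. g j) (\<Sum>j\<in>J. v' j) (\<Sum>j\<in>J. g' j)"
  using assms
proof (induction J rule: finite_induct)
  case empty
  show ?case by (simp add: jet_close_def)
next
  case (insert j J)
  then show ?case by (simp add: jet_close_add)
qed

lemma jet_close_const:
  assumes "1 \<le> B" "0 \<le> \<epsilon>" "\<bar>c\<bar> \<le> B" "\<bar>c'\<bar> \<le> B" "\<bar>c - c'\<bar> \<le> \<epsilon>"
  shows "jet_close B \<epsilon> c 0 c' 0"
  using assms mult_right_mono[of 1 B \<epsilon>] by (simp add: jet_close_def)

lemma norm_scaleR_diff_le:
  "norm (a *\<^sub>R u - a' *\<^sub>R u') \<le> \<bar>a - a'\<bar> * norm u + \<bar>a'\<bar> * norm (u - u')"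
proof -
  have "a *\<^sub>R u - a' *\<^sub>R u' = (a - a') *\<^sub>R u + a' *\<^sub>R (u - u')"
    by (simp add: algebra_simps)
  then show ?thesis
    by (metis norm_scaleR norm_triangle_ineq)
qed

lemma jet_close_scale:
  assumes jet: "jet_close t \<epsilon> v g v' g'"
    and m: "\<bar>m\<bar> \<le> B" "\<bar>m'\<bar> \<le> B" "\<bar>m - m'\<bar> \<le> \<epsilon>" and \<epsilon>: "0 \<le> \<epsilon>"
  shows "jet_close ((1 + B) * t) \<epsilon> (m * v) (m *\<^sub>R g) (m' * v') (m' *\<^sub>R g')"
proof -
  have t: "0 \<le> t" and B: "0 \<le> B"
    using jet m by (auto simp: jet_close_def)
  have "\<bar>m * v - m' * v'\<bar> \<le> \<bar>m - m'\<bar> * \<bar>v\<bar> + \<bar>m'\<bar> * \<bar>v - v'\<bar>"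
    using norm_scaleR_diff_le[of m v m' v'] by simp
  also have "\<dots> \<le> \<epsilon> * t + B * (t * \<epsilon>)"
    using jet m by (intro add_mono mult_mono) (auto simp: jet_close_def)
  finally have "\<bar>m * v - m' * v'\<bar> \<le> \<epsilon> * t + B * (t * \<epsilon>)" .
  moreover have "norm (m *\<^sub>R g - m' *\<^sub>R g') \<le> \<bar>m - m'\<bar> * norm g + \<bar>m'\<bar> * norm (g - g')"
    by (rule norm_scaleR_diff_le)
  moreover have "\<dots> \<le> \<epsilon> * t + B * (t * \<epsilon>)"
    using jet m by (intro add_mono mult_mono) (auto simp: jet_close_def)
  moreover have "\<bar>m * v\<bar> \<le> B * t" "\<bar>m' * v'\<bar> \<le> B * t" "norm (m *\<^sub>R g) \<le> B * t" "norm (m' *\<^sub>R g') \<le> B * t"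
    using jet m by (auto simp: jet_close_def abs_mult intro: mult_mono)
  moreover have "B * t \<le> (1 + B) * t" "\<epsilon> * t + B * (t * \<epsilon>) = (1 + B) * t * \<epsilon>"
    using t by (simp_all add: algebra_simps)
  ultimately show ?thesis
    unfolding jet_close_def by linarith
qed

lemma jet_close_eta3:
  assumes jet: "jet_close s \<epsilon> v g v' g'" and \<epsilon>: "0 \<le> \<epsilon>"
  shows "jet_close (9 * s ^ 3) \<epsilon> (eta3 v) (deta3 v *\<^sub>R g) (eta3 v') (deta3 v' *\<^sub>R g')"
proof -
  have v: "\<bar>v\<bar> \<le> s" "\<bar>v'\<bar> \<le> s" "\<bar>v - v'\<bar> \<le> s * \<epsilon>"
    and g: "norm g \<le> s" "norm g' \<le> s" "norm (g - g') \<le> s * \<epsilon>"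
    using jet by (auto simp: jet_close_def)
  have s: "0 \<le> s"
    using v by auto
  have d: "\<bar>deta3 v\<bar> \<le> 3 * s ^ 2" "\<bar>deta3 v'\<bar> \<le> 3 * s ^ 2"
    using v deta3_le deta3_nonneg by auto
  have "\<bar>eta3 v - eta3 v'\<bar> \<le> 3 * s ^ 2 * (s * \<epsilon>)"
    using eta3_lipschitz[OF v(1,2)] mult_left_mono[OF v(3), of "3 * s ^ 2"] by simp
  moreover have "\<bar>deta3 v - deta3 v'\<bar> \<le> 6 * s * (s * \<epsilon>)"
    using deta3_lipschitz[OF v(1,2)] mult_left_mono[OF v(3), of "6 * s"] s by simp
  then have "\<bar>deta3 v - deta3 v'\<bar> * norm g + \<bar>deta3 v'\<bar> * norm (g - g')
      \<le> 6 * s * (s * \<epsilon>) * s + 3 * s ^ 2 * (s * \<epsilon>)"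
    using d g s \<epsilon> by (intro add_mono mult_mono) auto
  moreover have "norm (deta3 v *\<^sub>R g - deta3 v' *\<^sub>R g')
      \<le> \<bar>deta3 v - deta3 v'\<bar> * norm g + \<bar>deta3 v'\<bar> * norm (g - g')"
    by (rule norm_scaleR_diff_le)
  moreover have "norm (deta3 v *\<^sub>R g) \<le> 3 * s ^ 2 * s" "norm (deta3 v' *\<^sub>R g') \<le> 3 * s ^ 2 * s"
    using d g by (auto intro: mult_mono)
  moreover have "\<bar>eta3 v\<bar> \<le> s ^ 3" "\<bar>eta3 v'\<bar> \<le> s ^ 3"
    using v abs_eta3_le by auto
  moreover have "3 * s ^ 2 * (s * \<epsilon>) \<le> 9 * s ^ 3 * \<epsilon>" "3 * s ^ 2 * s \<le> 9 * s ^ 3" "s ^ 3 \<le> 9 * s ^ 3"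
    "6 * s * (s * \<epsilon>) * s + 3 * s ^ 2 * (s * \<epsilon>) = 9 * s ^ 3 * \<epsilon>"
    using s \<epsilon> by (simp_all add: power2_eq_square power3_eq_cube algebra_simps)
  ultimately show ?thesis
    unfolding jet_close_def by linarith
qed

lemma jet_close_neuron:
  fixes W :: nat and s B :: real
  assumes "\<And>j. j < W \<Longrightarrow> jet_close s \<epsilon> (v j) (g j) (v' j) (g' j)"
    and "\<And>j. j < W \<Longrightarrow> \<bar>m j\<bar> \<le> B \<and> \<bar>m' j\<bar> \<le> B \<and> \<bar>m j - m' j\<bar> \<le> \<epsilon>"
    and "\<bar>c\<bar> \<le> B" "\<bar>c'\<bar> \<le> B" "\<bar>c - c'\<bar> \<le> \<epsilon>" "1 \<le> B" "0 \<le> \<epsilon>"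
  shows "jet_close (W * ((1 + B) * (9 * s ^ 3)) + B) \<epsilon>
    ((\<Sum>j<W. m j * eta3 (v j)) + c) (\<Sum>j<W. (m j * deta3 (v j)) *\<^sub>R g j)
    ((\<Sum>j<W. m' j * eta3 (v' j)) + c') (\<Sum>j<W. (m' j * deta3 (v' j)) *\<^sub>R g' j)"
proof -
  have "jet_close ((1 + B) * (9 * s ^ 3)) \<epsilon>
      (m j * eta3 (v j)) (m j *\<^sub>R (deta3 (v j) *\<^sub>R g j))
      (m' j * eta3 (v' j)) (m' j *\<^sub>R (deta3 (v' j) *\<^sub>R g' j))" if "j < W" for j
    using assms(1,2)[OF that] assms(7) by (intro jet_close_scale jet_close_eta3) auto
  then have "jet_close (\<Sum>j<W. (1 + B) * (9 * s ^ 3)) \<epsilon>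
      (\<Sum>j<W. m j * eta3 (v j)) (\<Sum>j<W. m j *\<^sub>R (deta3 (v j) *\<^sub>R g j))
      (\<Sum>j<W. m' j * eta3 (v' j)) (\<Sum>j<W. m' j *\<^sub>R (deta3 (v' j) *\<^sub>R g' j))"
    by (intro jet_close_sum) auto
  then show ?thesis
    using jet_close_add[OF _ jet_close_const[OF assms(6,7,3,4,5)]] by simp
qed

lemma norm_le_card_mult:
  fixes a :: "real^'d"
  assumes "\<And>k. \<bar>a $ k\<bar> \<le> c"
  shows "norm a \<le> real CARD('d) * c"
  using norm_le_l1_cart[of a] sum_mono[of UNIV "\<lambda>k. \<bar>a $ k\<bar>" "\<lambda>_. c"] assms by simp

lemma abs_inner_Omega_le:
  fixes a :: "real^'d"
  assumes "x \<in> Omega" "\<And>k. \<bar>a $ k\<bar> \<le> c"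
  shows "\<bar>a \<bullet> x\<bar> \<le> real CARD('d) * c"
proof -
  have "\<bar>a $ k * x $ k\<bar> \<le> c" for k
    using assms mult_mono[of "\<bar>a $ k\<bar>" c "\<bar>x $ k\<bar>" 1] by (force simp: Omega_def abs_mult)
  then have "(\<Sum>k\<in>UNIV. \<bar>a $ k * x $ k\<bar>) \<le> real CARD('d) * c"
    using sum_mono[of UNIV "\<lambda>k. \<bar>a $ k * x $ k\<bar>" "\<lambda>_. c"] by simp
  moreover have "\<bar>a \<bullet> x\<bar> \<le> (\<Sum>k\<in>UNIV. \<bar>a $ k * x $ k\<bar>)"
    unfolding inner_vec_def inner_real_def by (rule sum_abs)
  ultimately show ?thesis by linarith
qed

lemma jet_close_inner:
  fixes a a' :: "real^'d"
  assumes "x \<in> Omega" "1 \<le> B" "0 \<le> \<epsilon>"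
    and "\<And>k. \<bar>a $ k\<bar> \<le> B" "\<And>k. \<bar>a' $ k\<bar> \<le> B" "\<And>k. \<bar>a $ k - a' $ k\<bar> \<le> \<epsilon>"
  shows "jet_close (real CARD('d) * B) \<epsilon> (a \<bullet> x) a (a' \<bullet> x) a'"
proof -
  have "real CARD('d) * \<epsilon> \<le> real CARD('d) * B * \<epsilon>"
    using assms(2,3) mult_right_mono[of 1 B \<epsilon>] by (simp add: mult_left_mono mult.assoc)
  moreover have "\<bar>a \<bullet> x - a' \<bullet> x\<bar> \<le> real CARD('d) * \<epsilon>"
    using abs_inner_Omega_le[where a = "a - a'" and c = \<epsilon>] assms by (simp add: inner_diff_left)
  moreover have "norm (a - a') \<le> real CARD('d) * \<epsilon>"
    using norm_le_card_mult[where a = "a - a'" and c = \<epsilon>] assms by simp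
  moreover have "\<bar>a \<bullet> x\<bar> \<le> real CARD('d) * B" "\<bar>a' \<bullet> x\<bar> \<le> real CARD('d) * B"
    "norm a \<le> real CARD('d) * B" "norm a' \<le> real CARD('d) * B"
    using assms abs_inner_Omega_le norm_le_card_mult by blast+
  ultimately show ?thesis
    unfolding jet_close_def by linarith
qed

text \<open>Applied to the entrywise difference of two parameter families, weights_bounded
  also expresses that they are \<epsilon>-close.\<close>

definition weights_bounded :: "nat \<Rightarrow> nat \<Rightarrow> real \<Rightarrow> (nat \<Rightarrow> real^'d)
    \<Rightarrow> (nat \<Rightarrow> nat \<Rightarrow> nat \<Rightarrow> real) \<Rightarrow> (nat \<Rightarrow> nat \<Rightarrow> real) \<Rightarrow> bool" where
  "weights_bounded L W B A M b \<longleftrightarrow>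
     (\<forall>i < rows L W 1. \<forall>j. \<bar>A i $ j\<bar> \<le> B)
   \<and> (\<forall>l\<in>{2..L}. \<forall>i < rows L W l. \<forall>j < W. \<bar>M l i j\<bar> \<le> B)
   \<and> (\<forall>l\<in>{1..L}. \<forall>i < rows L W l. \<bar>b l i\<bar> \<le> B)"

text \<open>cubic_tower Q l bounds the jets of layer l + 1: each layer applies eta3, a cubic,
  to the previous one.\<close>

fun cubic_tower :: "real \<Rightarrow> nat \<Rightarrow> real" where
  "cubic_tower Q 0 = Q"
| "cubic_tower Q (Suc n) = Q * cubic_tower Q n ^ 3"

lemma one_le_cubic_tower: "1 \<le> Q \<Longrightarrow> 1 \<le> cubic_tower Q n"
  by (induction n) (auto intro: order_trans[OF _ mult_mono[of 1 Q 1]])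

lemma cubic_tower_le_power:
  assumes Q: "1 \<le> Q"
  shows "cubic_tower Q n \<le> Q ^ 3 ^ (n + 1)"
proof -
  have "Q * cubic_tower Q n \<le> Q ^ 3 ^ (n + 1)"
  proof (induction n)
    case 0
    show ?case
      using Q power_increasing[of 2 3 Q] by (simp add: power2_eq_square)
  next
    case (Suc n)
    have "Q * Q \<le> Q ^ 3"
      using Q power_increasing[of 2 3 Q] by (simp add: power2_eq_square)
    then have "Q * cubic_tower Q (Suc n) \<le> Q ^ 3 * cubic_tower Q n ^ 3"
      using one_le_cubic_tower[OF Q, of n] by (simp add: mult.assoc[symmetric] mult_right_mono)
    also have "\<dots> = (Q * cubic_tower Q n) ^ 3"
      by (simp add: power_mult_distrib)
    also have "\<dots> \<le> (Q ^ 3 ^ (n + 1)) ^ 3"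
      using Suc.IH Q one_le_cubic_tower[OF Q, of n] by (intro power_mono) auto
    also have "\<dots> = Q ^ 3 ^ (Suc n + 1)"
      by (simp only: power_mult[symmetric]) (simp add: mult.commute)
    finally show ?case .
  qed
  then show ?thesis
    using mult_right_mono[of 1 Q "cubic_tower Q n"] Q one_le_cubic_tower[OF Q, of n] by linarith
qed

lemma layer_jet_close:
  fixes A A' :: "nat \<Rightarrow> real^'d"
  assumes bounded: "weights_bounded L W B A M b" "weights_bounded L W B A' M' b'"
    and close: "weights_bounded L W \<epsilon> (\<lambda>i. A i - A' i) (\<lambda>l i j. M l i j - M' l i j)
      (\<lambda>l i. b l i - b' l i)"
    and B: "1 \<le> B" and \<epsilon>: "0 \<le> \<epsilon>" and x: "x \<in> Omega"
    and Q: "(real CARD('d) + 1) * B \<le> Q" "9 * real W * (1 + B) + B \<le> Q"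
  shows "Suc l \<le> L \<Longrightarrow> i < rows L W (Suc l) \<Longrightarrow>
    jet_close (cubic_tower Q l) \<epsilon>
      (layer_val W A M b (Suc l) x i) (layer_grad W A M b (Suc l) x i)
      (layer_val W A' M' b' (Suc l) x i) (layer_grad W A' M' b' (Suc l) x i)"
proof (induction l arbitrary: i)
  case 0
  then have "jet_close (real CARD('d) * B) \<epsilon> (A i \<bullet> x) (A i) (A' i \<bullet> x) (A' i)"
    using bounded close by (intro jet_close_inner[OF x B \<epsilon>]) (auto simp: weights_bounded_def)
  moreover have "jet_close B \<epsilon> (b 1 i) 0 (b' 1 i) 0"
    using 0 bounded close by (intro jet_close_const[OF B \<epsilon>]) (auto simp: weights_bounded_def)
  ultimately show ?case
    using jet_close_add Q(1) \<epsilon> by (fastforce simp: algebra_simps elim: jet_close_mono)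
next
  case (Suc l)
  define s where "s = cubic_tower Q l"
  have "1 \<le> Q"
    using Q(1) B mult_mono[of 1 "real CARD('d) + 1" 1 B] by linarith
  then have s: "1 \<le> s" unfolding s_def by (rule one_le_cubic_tower)
  have rows: "rows L W (Suc l) = W" "Suc (Suc l) \<in> {2..L}" "Suc (Suc l) \<in> {1..L}"
    using Suc.prems by (auto simp: rows_def)
  have "jet_close (W * ((1 + B) * (9 * s ^ 3)) + B) \<epsilon>
      (layer_val W A M b (Suc (Suc l)) x i) (layer_grad W A M b (Suc (Suc l)) x i)
      (layer_val W A' M' b' (Suc (Suc l)) x i) (layer_grad W A' M' b' (Suc (Suc l)) x i)"
    using Suc bounded close rows B \<epsilon> unfolding layer_val.simps layer_grad.simps
    by (intro jet_close_neuron) (auto simp: weights_bounded_def s_def)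
  moreover have "W * ((1 + B) * (9 * s ^ 3)) + B \<le> Q * s ^ 3"
  proof -
    have "B \<le> B * s ^ 3"
      using s B mult_left_mono[of 1 "s ^ 3" B] by simp
    then show ?thesis
      using mult_right_mono[OF Q(2), of "s ^ 3"] s by (simp add: algebra_simps)
  qed
  ultimately show ?case
    using \<epsilon> by (auto simp: s_def elim: jet_close_mono)
qed

section \<open>Counting sparse quantized networks\<close>

text \<open>All parameters of a network are stored as one function on a disjoint-sum index
  type; weight_indices L W are the entries that the class Phi L W S B actually constrains.\<close>

type_synonym 'd weight_index = "(nat \<times> 'd) + ((nat \<times> nat \<times> nat) + (nat \<times> nat))"

definition flatten_weights :: "(nat \<Rightarrow> real^'d) \<Rightarrow> (nat \<Rightarrow> nat \<Rightarrow> nat \<Rightarrow> real)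
    \<Rightarrow> (nat \<Rightarrow> nat \<Rightarrow> real) \<Rightarrow> 'd weight_index \<Rightarrow> real" where
  "flatten_weights A M b = case_sum (\<lambda>(i, k). A i $ k) (case_sum (\<lambda>(l, i, j). M l i j) (\<lambda>(l, i). b l i))"

definition weights_A :: "('d weight_index \<Rightarrow> real) \<Rightarrow> nat \<Rightarrow> real^'d" where
  "weights_A p i = (\<chi> k. p (Inl (i, k)))"

definition weights_M :: "('d weight_index \<Rightarrow> real) \<Rightarrow> nat \<Rightarrow> nat \<Rightarrow> nat \<Rightarrow> real" where
  "weights_M p l i j = p (Inr (Inl (l, i, j)))"

definition weights_b :: "('d weight_index \<Rightarrow> real) \<Rightarrow> nat \<Rightarrow> nat \<Rightarrow> real" where
  "weights_b p l i = p (Inr (Inr (l, i)))"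

definition weight_indices :: "nat \<Rightarrow> nat \<Rightarrow> 'd weight_index set" where
  "weight_indices L W =
     Inl ` {(i, k). i < rows L W 1}
   \<union> Inr ` Inl ` {(l, i, j). l \<in> {2..L} \<and> i < rows L W l \<and> j < W}
   \<union> Inr ` Inr ` {(l, i). l \<in> {1..L} \<and> i < rows L W l}"

lemma flatten_unflatten_weights:
  fixes p :: "('d::finite) weight_index \<Rightarrow> real"
  shows "flatten_weights (weights_A p) (weights_M p) (weights_b p) = p"
proof
  fix x :: "'d weight_index"
  show "flatten_weights (weights_A p) (weights_M p) (weights_b p) x = p x"
    by (cases x rule: sum.exhaust; cases "projl x"; cases "projr x")
       (auto simp: flatten_weights_def weights_A_def weights_M_def weights_b_def split: sum.splits)
qed

lemma flatten_weights_diff: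
  "flatten_weights (\<lambda>i. A i - A' i) (\<lambda>l i j. M l i j - M' l i j) (\<lambda>l i. b l i - b' l i)
   = (\<lambda>x. flatten_weights A M b x - flatten_weights A' M' b' x)"
  by (auto simp: fun_eq_iff flatten_weights_def split: sum.split)

lemma weights_bounded_iff_flatten:
  "weights_bounded L W B A M b \<longleftrightarrow> (\<forall>x\<in>weight_indices L W. \<bar>flatten_weights A M b x\<bar> \<le> B)"
  unfolding weights_bounded_def weight_indices_def flatten_weights_def
  by (auto simp: ball_Un Ball_image_comp)

lemma weight_indices_subset:
  "weight_indices L W \<subseteq> Inl ` ({..W} \<times> UNIV)
     \<union> Inr ` Inl ` ({..L} \<times> {..W} \<times> {..<W}) \<union> Inr ` Inr ` ({..L} \<times> {..W})"
  by (auto simp: weight_indices_def rows_def split: if_splits)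

lemma finite_weight_indices: "finite (weight_indices L W :: ('d::finite) weight_index set)"
  by (rule finite_subset[OF weight_indices_subset]) auto

lemma card_weight_indices_le:
  assumes "1 \<le> W"
  shows "real (card (weight_indices L W :: ('d::finite) weight_index set))
    \<le> (2 * (real CARD('d) + L + 1) * W) ^ 2"
proof -
  have "card (weight_indices L W :: 'd weight_index set)
      \<le> card (Inl ` ({..W} \<times> UNIV) :: 'd weight_index set)
       + card (Inr ` Inl ` ({..L} \<times> {..W} \<times> {..<W}) :: 'd weight_index set)
       + card (Inr ` Inr ` ({..L} \<times> {..W}) :: 'd weight_index set)"
    by (rule order_trans[OF card_mono[OF _ weight_indices_subset]])
       (auto intro: order_trans[OF card_Un_le] add_mono)
  also have "\<dots> = (W + 1) * CARD('d) + (L + 1) * ((W + 1) * W) + (L + 1) * (W + 1)"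
    by (simp add: card_image inj_on_def card_cartesian_product)
  also have "\<dots> \<le> (W + 1) ^ 2 * (CARD('d) + L + 1)"
    by (simp add: power2_eq_square algebra_simps)
  also have "\<dots> \<le> (2 * W) ^ 2 * (CARD('d) + L + 1) ^ 2"
    using assms by (intro mult_mono power_mono) (auto simp: power2_eq_square)
  also have "\<dots> = (2 * (CARD('d) + L + 1) * W) ^ 2"
    by (simp only: power_mult_distrib mult_ac)
  finally show ?thesis
    by (simp only: of_nat_le_iff[symmetric, where 'a = real] of_nat_power of_nat_mult of_nat_add
        of_nat_1 of_nat_numeral)
qed

lemma nnz_eq_card_flatten:
  fixes A :: "nat \<Rightarrow> real^'d"
  shows "nnz L W A M b = card {x \<in> weight_indices L W. flatten_weights A M b x \<noteq> 0}"
proof -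
  define SA where "SA = {(i, j). i < rows L W 1 \<and> A i $ j \<noteq> 0}"
  define TM where "TM l = {(i, j). i < rows L W l \<and> j < W \<and> M l i j \<noteq> 0}" for l
  define Tb where "Tb l = {i. i < rows L W l \<and> b l i \<noteq> 0}" for l
  define SM where "SM = (\<Union>l\<in>{2..L}. (\<lambda>(i, j). (l, i, j)) ` TM l)"
  define Sb where "Sb = (\<Union>l\<in>{1..L}. Pair l ` Tb l)"
  have fin_TM: "finite (TM l)" for l
    by (rule finite_subset[of _ "{..<rows L W l} \<times> {..<W}"]) (auto simp: TM_def)
  have fin: "finite SA" "finite (TM l)" "finite (Tb l)" "finite SM" "finite Sb" for l
    using fin_TM by (auto intro: finite_subset[of _ "{..<rows L W 1} \<times> UNIV"]
        simp: SA_def Tb_def SM_def Sb_def)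
  have "card SM = (\<Sum>l\<in>{2..L}. card (TM l))" "card Sb = (\<Sum>l\<in>{1..L}. card (Tb l))"
    unfolding SM_def Sb_def
    by (subst card_UN_disjoint; auto simp: fin inj_on_def intro!: sum.cong card_image)+
  moreover have "{x \<in> weight_indices L W. flatten_weights A M b x \<noteq> 0}
      = Inl ` SA \<union> (Inr ` Inl ` SM \<union> Inr ` Inr ` Sb)"
    by (auto simp: weight_indices_def flatten_weights_def SA_def SM_def Sb_def TM_def Tb_def image_iff)
  moreover have "card (Inl ` SA \<union> (Inr ` Inl ` SM \<union> Inr ` Inr ` Sb)
      :: 'd weight_index set) = card SA + (card SM + card Sb)"
    using fin by (subst card_Un_disjoint; auto simp: card_image card_Un_disjoint inj_on_def)+
  ultimately show ?thesis
    unfolding nnz_def SA_def TM_def Tb_def by simp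
qed

definition sparse_funs :: "'a set \<Rightarrow> 'b::zero set \<Rightarrow> nat \<Rightarrow> ('a \<Rightarrow> 'b) set" where
  "sparse_funs I G S =
     {p. (\<forall>x. x \<notin> I \<longrightarrow> p x = 0) \<and> (\<forall>x\<in>I. p x \<in> G) \<and> card {x\<in>I. p x \<noteq> 0} \<le> S}"

definition fun_of_pairs :: "('a \<times> 'b::zero) list \<Rightarrow> 'a \<Rightarrow> 'b" where
  "fun_of_pairs xs x = (case map_of xs x of None \<Rightarrow> 0 | Some v \<Rightarrow> v)"

text \<open>The padding pairs are harmless because map_of only sees the first occurrence of a key.\<close>

lemma fun_of_pairs_graph_padded:
  assumes "\<And>x. x \<notin> set ks \<Longrightarrow> p x = 0"
  shows "fun_of_pairs (map (\<lambda>k. (k, p k)) ks @ replicate n (i, p i)) = p"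
proof
  fix x
  have padding: "map_of (replicate n (i, p i)) x \<in> {None, Some (p x)}"
    by (induction n) auto
  show "fun_of_pairs (map (\<lambda>k. (k, p k)) ks @ replicate n (i, p i)) x = p x"
  proof (cases "x \<in> set ks")
    case True
    then show ?thesis
      by (simp add: fun_of_pairs_def map_add_def map_of_map_restrict)
  next
    case False
    then show ?thesis
      using assms[OF False] padding
      by (auto simp: fun_of_pairs_def map_add_def map_of_map_restrict split: option.split)
  qed
qed

lemma sparse_funs_subset_image:
  assumes "finite I" "i0 \<in> I"
  shows "sparse_funs I G S \<subseteq> fun_of_pairs ` {xs. set xs \<subseteq> I \<times> G \<and> length xs = S}"
proof
  fix p assume p: "p \<in> sparse_funs I G S"
  obtain ks where ks: "set ks = {x\<in>I. p x \<noteq> 0}" "distinct ks"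
    using finite_distinct_list[of "{x\<in>I. p x \<noteq> 0}"] assms(1) by auto
  define xs where "xs = map (\<lambda>k. (k, p k)) ks @ replicate (S - length ks) (i0, p i0)"
  have "length ks \<le> S"
    using p ks distinct_card[OF ks(2)] by (simp add: sparse_funs_def)
  then have "set xs \<subseteq> I \<times> G" "length xs = S"
    using p ks assms(2) by (auto simp: xs_def sparse_funs_def)
  moreover have "fun_of_pairs xs = p"
    unfolding xs_def using p ks(1) by (intro fun_of_pairs_graph_padded) (auto simp: sparse_funs_def)
  ultimately show "p \<in> fun_of_pairs ` {xs. set xs \<subseteq> I \<times> G \<and> length xs = S}"
    by blast
qed

lemma
  assumes "finite I" "i0 \<in> I" "finite G"
  shows finite_sparse_funs: "finite (sparse_funs I G S)"
    and card_sparse_funs_le: "card (sparse_funs I G S) \<le> (card I * card G) ^ S"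
proof -
  let ?lists = "{xs. set xs \<subseteq> I \<times> G \<and> length xs = S}"
  have lists: "finite ?lists" "card ?lists = (card I * card G) ^ S"
    using assms by (simp_all add: finite_lists_length_eq card_lists_length_eq card_cartesian_product)
  show "finite (sparse_funs I G S)"
    using finite_subset[OF sparse_funs_subset_image[OF assms(1,2)]] lists by blast
  have "card (sparse_funs I G S) \<le> card (fun_of_pairs ` ?lists)"
    using lists(1) by (intro card_mono sparse_funs_subset_image[OF assms(1,2)]) auto
  also have "\<dots> \<le> card ?lists"
    using lists(1) by (rule card_image_le)
  finally show "card (sparse_funs I G S) \<le> (card I * card G) ^ S"
    using lists(2) by simp
qed

definition trunc_int :: "real \<Rightarrow> int" where
  "trunc_int y = (if 0 \<le> y then \<lfloor>y\<rfloor> else \<lceil>y\<rceil>)"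

lemma abs_trunc_int_le: "\<bar>of_int (trunc_int y)\<bar> \<le> \<bar>y\<bar>"
  by (auto simp: trunc_int_def ceiling_le_iff le_floor_iff of_int_floor_le le_of_int_ceiling)

lemma abs_diff_trunc_int_le: "\<bar>y - of_int (trunc_int y)\<bar> \<le> 1"
proof (cases "0 \<le> y")
  case True
  then show ?thesis
    using real_of_int_floor_add_one_gt[of y] of_int_floor_le[of y]
    unfolding trunc_int_def by (simp only: if_True abs_le_iff) linarith
next
  case False
  then show ?thesis
    using ceiling_correct[of y] by (simp add: trunc_int_def)
qed

definition quantize :: "real \<Rightarrow> real \<Rightarrow> real" where
  "quantize e t = e * of_int (trunc_int (t / e))"

definition grid :: "real \<Rightarrow> real \<Rightarrow> real set" where
  "grid e B = (\<lambda>k. e * of_int k) ` {- \<lfloor>B / e\<rfloor> .. \<lfloor>B / e\<rfloor>}"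

lemma quantize_zero: "quantize e 0 = 0"
  by (simp add: quantize_def trunc_int_def)

lemma abs_quantize_le: "0 < e \<Longrightarrow> \<bar>quantize e t\<bar> \<le> \<bar>t\<bar>"
  using abs_trunc_int_le[of "t / e"]
  by (simp add: quantize_def abs_mult abs_divide field_simps)

lemma abs_diff_quantize_le: "0 < e \<Longrightarrow> \<bar>t - quantize e t\<bar> \<le> e"
proof -
  assume e: "0 < e"
  have "t - quantize e t = e * (t / e - of_int (trunc_int (t / e)))"
    using e by (simp add: quantize_def algebra_simps)
  then show ?thesis
    using abs_diff_trunc_int_le[of "t / e"] e by (simp add: abs_mult)
qed

lemma quantize_mem_grid:
  assumes "0 < e" "\<bar>t\<bar> \<le> B"
  shows "quantize e t \<in> grid e B"
proof -
  have "\<bar>of_int (trunc_int (t / e))\<bar> \<le> B / e"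
    using abs_trunc_int_le[of "t / e"] divide_right_mono[OF assms(2), of e] assms(1)
    by (simp add: abs_divide)
  then have "\<bar>trunc_int (t / e)\<bar> \<le> \<lfloor>B / e\<rfloor>"
    by (simp add: le_floor_iff)
  then show ?thesis
    unfolding grid_def quantize_def by (intro imageI) auto
qed

lemma abs_le_of_mem_grid:
  assumes "0 < e" "g \<in> grid e B"
  shows "\<bar>g\<bar> \<le> B"
proof -
  obtain k where "k \<in> {- \<lfloor>B / e\<rfloor> .. \<lfloor>B / e\<rfloor>}" "g = e * of_int k"
    using assms(2) unfolding grid_def by blast
  then have k: "g = e * of_int k" "\<bar>k\<bar> \<le> \<lfloor>B / e\<rfloor>"
    by auto
  then have "\<bar>of_int k\<bar> \<le> B / e"
    using of_int_floor_le[of "B / e"] by (metis of_int_abs of_int_le_iff order_trans)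
  then show ?thesis
    using assms(1) k(1) by (simp add: abs_mult field_simps)
qed

lemma finite_grid: "finite (grid e B)"
  by (simp add: grid_def)

lemma card_grid_le:
  assumes "0 < e" "e \<le> B"
  shows "real (card (grid e B)) \<le> 3 * B / e"
proof -
  have "card (grid e B) \<le> nat (2 * \<lfloor>B / e\<rfloor> + 1)"
    unfolding grid_def using card_image_le[of "{- \<lfloor>B / e\<rfloor> .. \<lfloor>B / e\<rfloor>}"] by simp
  moreover have "0 \<le> \<lfloor>B / e\<rfloor>"
    using assms by simp
  ultimately have "real (card (grid e B)) \<le> 2 * of_int \<lfloor>B / e\<rfloor> + 1"
    using of_nat_le_iff[of "card (grid e B)" "nat (2 * \<lfloor>B / e\<rfloor> + 1)", where 'a = real]
    by simp
  moreover have "1 \<le> B / e" "3 * B / e = 3 * (B / e)"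
    using assms by simp_all
  ultimately show ?thesis
    using of_int_floor_le[of "B / e"] by linarith
qed

section \<open>Covering the gradient class\<close>

lemma sup_dist_le:
  assumes "\<And>x. x \<in> Omega \<Longrightarrow> \<bar>g x - h x\<bar> \<le> \<delta>"
  shows "sup_dist g h \<le> \<delta>"
  unfolding sup_dist_def
proof (rule cSUP_least)
  show "(Omega :: (real^'a) set) \<noteq> {}"
    by (auto simp: Omega_def intro!: exI[of _ 0])
qed (use assms in auto)

lemma covering_number_le_card:
  assumes "finite T" "T \<subseteq> A" "\<forall>g\<in>A. \<exists>t\<in>T. d g t \<le> \<delta>"
  shows "\<exists>n. covering_number \<delta> A d = enat n \<and> n \<le> card T"
proof -
  have le: "covering_number \<delta> A d \<le> enat (card T)"
    unfolding covering_number_def using assms by (blast intro: Inf_lower)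
  then obtain n where "covering_number \<delta> A d = enat n"
    by (cases "covering_number \<delta> A d") auto
  with le show ?thesis by auto
qed

definition network :: "nat \<Rightarrow> nat \<Rightarrow> (('d::finite) weight_index \<Rightarrow> real) \<Rightarrow> real^'d \<Rightarrow> real" where
  "network L W p x = layer_val W (weights_A p) (weights_M p) (weights_b p) L x 0"

lemma network_in_Phi:
  assumes "p \<in> sparse_funs (weight_indices L W) G S" "\<And>y. y \<in> G \<Longrightarrow> \<bar>y\<bar> \<le> B"
  shows "network L W p \<in> Phi L W S B"
proof -
  have "weights_bounded L W B (weights_A p) (weights_M p) (weights_b p)"
    using assms by (auto simp: weights_bounded_iff_flatten flatten_unflatten_weights sparse_funs_def)
  moreover have "nnz L W (weights_A p) (weights_M p) (weights_b p) \<le> S"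
    using assms(1) by (simp add: nnz_eq_card_flatten flatten_unflatten_weights sparse_funs_def)
  ultimately show ?thesis
    unfolding Phi_def weights_bounded_def network_def by blast
qed

lemma quantized_weights_exist:
  fixes A :: "nat \<Rightarrow> real^'d::finite"
  assumes "weights_bounded L W B A M b" "0 < \<epsilon>"
  obtains p where "p \<in> sparse_funs (weight_indices L W) (grid \<epsilon> B) (nnz L W A M b)"
    "weights_bounded L W B (weights_A p) (weights_M p) (weights_b p)"
    "weights_bounded L W \<epsilon> (\<lambda>i. A i - weights_A p i) (\<lambda>l i j. M l i j - weights_M p l i j)
       (\<lambda>l i. b l i - weights_b p l i)"
proof
  define I where "I = (weight_indices L W :: 'd weight_index set)"
  define p where "p x = (if x \<in> I then quantize \<epsilon> (flatten_weights A M b x) else 0)" for x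
  have bounded: "\<And>x. x \<in> I \<Longrightarrow> \<bar>flatten_weights A M b x\<bar> \<le> B"
    using assms(1) by (simp add: weights_bounded_iff_flatten I_def)
  have "{x\<in>I. p x \<noteq> 0} \<subseteq> {x\<in>I. flatten_weights A M b x \<noteq> 0}"
    by (auto simp: p_def quantize_zero)
  then have "card {x\<in>I. p x \<noteq> 0} \<le> nnz L W A M b"
    unfolding nnz_eq_card_flatten I_def by (intro card_mono) (auto simp: finite_weight_indices)
  then show "p \<in> sparse_funs (weight_indices L W) (grid \<epsilon> B) (nnz L W A M b)"
    using bounded assms(2) by (auto simp: sparse_funs_def p_def I_def quantize_mem_grid)
  show "weights_bounded L W B (weights_A p) (weights_M p) (weights_b p)"
    using bounded assms(2) abs_quantize_le
    by (auto simp: weights_bounded_iff_flatten flatten_unflatten_weights p_def I_def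
        intro: order_trans)
  show "weights_bounded L W \<epsilon> (\<lambda>i. A i - weights_A p i) (\<lambda>l i j. M l i j - weights_M p l i j)
      (\<lambda>l i. b l i - weights_b p l i)"
    using assms(2) abs_diff_quantize_le
    by (simp add: weights_bounded_iff_flatten flatten_weights_diff flatten_unflatten_weights
        p_def I_def)
qed

lemma norm_grad_network_close:
  fixes A A' :: "nat \<Rightarrow> real^'d"
  assumes "weights_bounded L W B A M b" "weights_bounded L W B A' M' b'"
    and "weights_bounded L W \<epsilon> (\<lambda>i. A i - A' i) (\<lambda>l i j. M l i j - M' l i j)
      (\<lambda>l i. b l i - b' l i)"
    and "1 \<le> B" "0 \<le> \<epsilon>" "x \<in> Omega" "1 \<le> L"
    and "(real CARD('d) + 1) * B \<le> Q" "9 * real W * (1 + B) + B \<le> Q"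
  shows "\<bar>norm (grad (\<lambda>x. layer_val W A M b L x 0) x) - norm (grad (\<lambda>x. layer_val W A' M' b' L x 0) x)\<bar>
    \<le> cubic_tower Q (L - 1) * \<epsilon>"
proof -
  obtain l where L: "L = Suc l"
    using assms(7) by (cases L) auto
  have "jet_close (cubic_tower Q l) \<epsilon>
      (layer_val W A M b (Suc l) x 0) (layer_grad W A M b (Suc l) x 0)
      (layer_val W A' M' b' (Suc l) x 0) (layer_grad W A' M' b' (Suc l) x 0)"
    using assms by (intro layer_jet_close) (auto simp: L rows_def)
  then show ?thesis
    unfolding L grad_layer_val jet_close_def
    by (auto intro: order_trans[OF norm_triangle_ineq3])
qed

lemma gradPhi_approx_by_network:
  fixes L W S :: nat and B \<epsilon> Q :: real
  assumes g: "g \<in> (gradPhi L W S B :: (real^'d::finite \<Rightarrow> real) set)"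
    and L: "1 \<le> L" and B: "1 \<le> B" and \<epsilon>: "0 < \<epsilon>"
    and Q: "(real CARD('d) + 1) * B \<le> Q" "9 * real W * (1 + B) + B \<le> Q"
  obtains p where "p \<in> sparse_funs (weight_indices L W) (grid \<epsilon> B) S"
    and "sup_dist g (\<lambda>x. norm (grad (network L W p) x)) \<le> cubic_tower Q (L - 1) * \<epsilon>"
proof -
  obtain F where F: "F \<in> Phi L W S B" "g = (\<lambda>x. norm (grad F x))"
    using g unfolding gradPhi_def by blast
  obtain A :: "nat \<Rightarrow> real^'d" and M b
    where bounded: "weights_bounded L W B A M b" and nnz: "nnz L W A M b \<le> S"
      and "F = (\<lambda>x. layer_val W A M b L x 0)"
    using F(1) unfolding Phi_def weights_bounded_def by blast
  with F(2) have g: "g = (\<lambda>x. norm (grad (\<lambda>x. layer_val W A M b L x 0) x))"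
    by simp
  obtain p where p: "p \<in> sparse_funs (weight_indices L W) (grid \<epsilon> B) (nnz L W A M b)"
    "weights_bounded L W B (weights_A p) (weights_M p) (weights_b p)"
    "weights_bounded L W \<epsilon> (\<lambda>i. A i - weights_A p i) (\<lambda>l i j. M l i j - weights_M p l i j)
       (\<lambda>l i. b l i - weights_b p l i)"
    using quantized_weights_exist[OF bounded \<epsilon>] by blast
  have "p \<in> sparse_funs (weight_indices L W) (grid \<epsilon> B) S"
    using p(1) nnz by (auto simp: sparse_funs_def)
  moreover have "sup_dist g (\<lambda>x. norm (grad (network L W p) x)) \<le> cubic_tower Q (L - 1) * \<epsilon>"
    unfolding g network_def[abs_def]
    by (intro sup_dist_le norm_grad_network_close[OF bounded p(2,3) B less_imp_le[OF \<epsilon>] _ L Q])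
  ultimately show ?thesis
    using that by blast
qed

lemma gradPhi_finite_cover:
  fixes L W S :: nat and B \<delta> Q :: real
  assumes L: "1 \<le> L" and B: "1 \<le> B" and \<delta>: "0 < \<delta>"
    and Q: "(real CARD('d::finite) + 1) * B \<le> Q" "9 * real W * (1 + B) + B \<le> Q"
  defines "\<epsilon> \<equiv> \<delta> / cubic_tower Q (L - 1)"
  shows "\<exists>T. finite T \<and> T \<subseteq> (gradPhi L W S B :: (real^'d \<Rightarrow> real) set)
     \<and> (\<forall>g\<in>gradPhi L W S B. \<exists>t\<in>T. sup_dist g t \<le> \<delta>)
     \<and> card T \<le> card (sparse_funs (weight_indices L W :: 'd weight_index set) (grid \<epsilon> B) S)"
proof (intro exI conjI)
  define Fs where "Fs = sparse_funs (weight_indices L W :: 'd weight_index set) (grid \<epsilon> B) S"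
  define T where "T = (\<lambda>p x. norm (grad (network L W p) x)) ` Fs"
  have "1 \<le> Q"
    using Q(1) B mult_mono[of 1 "real CARD('d) + 1" 1 B] by linarith
  then have s: "cubic_tower Q (L - 1) * \<epsilon> = \<delta>" and \<epsilon>: "0 < \<epsilon>"
    using one_le_cubic_tower[of Q "L - 1"] \<delta> by (auto simp: \<epsilon>_def)
  have "Inr (Inr (L, 0)) \<in> (weight_indices L W :: 'd weight_index set)"
    using L by (auto simp: weight_indices_def rows_def)
  then have "finite Fs"
    unfolding Fs_def by (intro finite_sparse_funs finite_weight_indices finite_grid)
  then show "finite T" "card T \<le> card Fs"
    unfolding T_def by (auto intro: card_image_le)
  show "T \<subseteq> gradPhi L W S B"
    unfolding T_def Fs_def gradPhi_def
    using network_in_Phi abs_le_of_mem_grid[OF \<epsilon>] by blast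
  show "\<forall>g\<in>gradPhi L W S B. \<exists>t\<in>T. sup_dist g t \<le> \<delta>"
    using gradPhi_approx_by_network[OF _ L B \<epsilon> Q] unfolding T_def Fs_def s by blast
qed

lemma card_indices_mult_card_grid_le:
  fixes L W :: nat and B \<delta> K :: real
  assumes L: "1 \<le> L" and W: "1 \<le> W" and B: "1 \<le> B" and \<delta>: "0 < \<delta>" "\<delta> \<le> 1"
    and K: "19 * (real CARD('d::finite) + L + 1) \<le> K"
  defines "Q \<equiv> 19 * (real CARD('d) + 1) * (W * B)"
  shows "real (card (weight_indices L W :: 'd weight_index set)
      * card (grid (\<delta> / cubic_tower Q (L - 1)) B)) \<le> (K * (W * B)) ^ (2 * 3 ^ L) / \<delta>"
proof -
  define d Y s where "d = real CARD('d)" and "Y = K * (W * B)" and "s = cubic_tower Q (L - 1)"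
  have "1 \<le> real W" "real W \<le> W * B" "B \<le> W * B"
    using W B mult_left_mono[of 1 B "real W"] mult_right_mono[of 1 "real W" B] by auto
  then have WB: "real W \<le> W * B" "B \<le> W * B" "1 \<le> W * B"
    by linarith+
  have "2 * (d + L + 1) \<le> K" "3 \<le> K" "19 * (d + 1) \<le> K"
    using K by (auto simp: d_def)
  then have Y: "2 * (d + L + 1) * W \<le> Y" "3 * B \<le> Y" "Q \<le> Y"
    using mult_mono[of "2 * (d + L + 1)" K "real W" "W * B"] mult_mono[of 3 K B "W * B"]
      mult_right_mono[of "19 * (d + 1)" K "W * B"] WB B
    unfolding Y_def Q_def d_def by auto
  have Q: "1 \<le> Q"
    using WB(3) mult_mono[of 1 "19 * (d + 1)" 1 "W * B"] by (simp add: Q_def d_def)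
  then have s: "1 \<le> s" "s \<le> Y ^ 3 ^ L"
    using cubic_tower_le_power[OF Q, of "L - 1"] one_le_cubic_tower[OF Q, of "L - 1"]
      power_mono[OF Y(3), of "3 ^ L"] L
    by (auto simp: s_def)
  have "real (card (weight_indices L W :: 'd weight_index set)) \<le> (2 * (d + L + 1) * W) ^ 2"
    unfolding d_def by (rule card_weight_indices_le[OF W])
  also have "\<dots> \<le> Y ^ 2"
    using Y(1) by (intro power_mono) (auto simp: d_def)
  finally have I: "real (card (weight_indices L W :: 'd weight_index set)) \<le> Y ^ 2" .
  have "\<delta> * 1 \<le> B * s"
    using \<delta> B s by (intro mult_mono) auto
  then have "real (card (grid (\<delta> / s) B)) \<le> 3 * B / (\<delta> / s)"
    using \<delta> s by (intro card_grid_le) (simp_all add: divide_le_eq)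
  also have "\<dots> \<le> Y * Y ^ 3 ^ L / \<delta>"
    using Y(2) s \<delta> B by (simp add: divide_right_mono mult_mono)
  finally have G: "real (card (grid (\<delta> / s) B)) \<le> Y * Y ^ 3 ^ L / \<delta>" .
  have "3 ^ 1 \<le> (3 ^ L :: nat)"
    using L by (intro power_increasing) auto
  then have "3 + 3 ^ L \<le> 2 * (3 ^ L :: nat)"
    by simp
  have "real (card (weight_indices L W :: 'd weight_index set) * card (grid (\<delta> / s) B))
      \<le> Y ^ 2 * (Y * Y ^ 3 ^ L / \<delta>)"
    using mult_mono[OF I G] by simp
  also have "\<dots> = Y ^ (3 + 3 ^ L) / \<delta>"
    by (simp add: power_add power2_eq_square power3_eq_cube mult_ac)
  also have "\<dots> \<le> Y ^ (2 * 3 ^ L) / \<delta>"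
    using \<open>3 + 3 ^ L \<le> 2 * 3 ^ L\<close> Y(3) Q \<delta> by (intro divide_right_mono power_increasing) auto
  finally show ?thesis
    unfolding s_def Y_def .
qed

lemma covering_number_gradPhi_le:
  fixes L W S :: nat and B \<delta> K :: real
  assumes L: "1 \<le> L" and W: "1 \<le> W" and B: "1 \<le> B" and \<delta>: "0 < \<delta>" "\<delta> \<le> 1"
    and K: "19 * (real CARD('d::finite) + L + 1) \<le> K"
  shows "\<exists>n. covering_number \<delta> (gradPhi L W S B :: (real^'d \<Rightarrow> real) set) sup_dist = enat n
    \<and> real n \<le> ((K * (W * B)) ^ (2 * 3 ^ L) / \<delta>) ^ S"
proof -
  define Q where "Q = 19 * (real CARD('d) + 1) * (W * B)"
  define \<epsilon> where "\<epsilon> = \<delta> / cubic_tower Q (L - 1)"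
  have "(real CARD('d) + 1) * B * 1 \<le> (real CARD('d) + 1) * B * (19 * real W)"
    using B W by (intro mult_left_mono) auto
  then have Q1: "(real CARD('d) + 1) * B \<le> Q"
    by (simp add: Q_def algebra_simps)
  have "real W \<le> real W * B" "B \<le> real W * B" "0 \<le> real CARD('d) * (real W * B)"
    using W B mult_left_mono[of 1 B "real W"] mult_right_mono[of 1 "real W" B] by auto
  moreover have "Q = 19 * (real W * B) + 19 * (real CARD('d) * (real W * B))"
    "9 * real W * (1 + B) + B = 9 * real W + 9 * (real W * B) + B"
    by (simp_all add: Q_def algebra_simps)
  ultimately have Q2: "9 * real W * (1 + B) + B \<le> Q"
    by linarith
  obtain T where T: "finite T" "T \<subseteq> (gradPhi L W S B :: (real^'d \<Rightarrow> real) set)"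
    "\<forall>g\<in>gradPhi L W S B. \<exists>t\<in>T. sup_dist g t \<le> \<delta>"
    "card T \<le> card (sparse_funs (weight_indices L W :: 'd weight_index set) (grid \<epsilon> B) S)"
    using gradPhi_finite_cover[OF L B \<delta>(1) Q1 Q2, where S = S, folded \<epsilon>_def] by blast
  obtain n where n: "covering_number \<delta> (gradPhi L W S B :: (real^'d \<Rightarrow> real) set) sup_dist = enat n"
    "n \<le> card T"
    using covering_number_le_card[OF T(1-3)] by blast
  have "Inr (Inr (L, 0)) \<in> (weight_indices L W :: 'd weight_index set)"
    using L by (auto simp: weight_indices_def rows_def)
  then have "n \<le> (card (weight_indices L W :: 'd weight_index set) * card (grid \<epsilon> B)) ^ S"
    using order_trans[OF T(4) card_sparse_funs_le[OF finite_weight_indices _ finite_grid]] n(2)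
    by (meson le_trans)
  then have "real n \<le> real (card (weight_indices L W :: 'd weight_index set) * card (grid \<epsilon> B)) ^ S"
    by (simp only: of_nat_power[symmetric] of_nat_le_iff)
  also have "\<dots> \<le> ((K * (W * B)) ^ (2 * 3 ^ L) / \<delta>) ^ S"
    using card_indices_mult_card_grid_le[OF L W B \<delta> K] unfolding \<epsilon>_def Q_def
    by (intro power_mono) auto
  finally show ?thesis
    using n(1) by blast
qed

lemma ln_mult_le_factor:
  fixes K y :: real
  assumes "1 \<le> K" "2 \<le> y"
  shows "ln (K * y) \<le> (1 + ln K / ln 2) * ln y"
proof -
  have "ln K = ln K / ln 2 * ln 2"
    by simp
  also have "\<dots> \<le> ln K / ln 2 * ln y"
    using assms by (intro mult_left_mono) auto
  finally show ?thesis
    using assms by (simp add: ln_mult algebra_simps)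
qed

lemma ln_le_of_le_power_div:
  fixes K y \<delta> :: real
  assumes n: "real n \<le> ((K * y) ^ (2 * k) / \<delta>) ^ S"
    and K: "1 \<le> K" and y: "2 \<le> y" and \<delta>: "0 < \<delta>" "\<delta> \<le> 1"
  shows "ln (real n) \<le> 2 * (1 + ln K / ln 2) * S * (ln (1 / \<delta>) + k * ln y)"
proof (cases "n = 0")
  case True
  have "0 \<le> ln (1 / \<delta>)" "0 \<le> ln y" "0 \<le> ln K"
    using K y \<delta> by auto
  then show ?thesis
    using True by simp
next
  case False
  then have "ln (real n) \<le> ln (((K * y) ^ (2 * k) / \<delta>) ^ S)"
    using n by simp
  also have "\<dots> = S * (ln (1 / \<delta>) + 2 * k * ln (K * y))"
    using K y \<delta> by (simp add: ln_realpow ln_div algebra_simps del: power_mult_distrib)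
  also have "\<dots> \<le> S * (ln (1 / \<delta>) + 2 * k * ((1 + ln K / ln 2) * ln y))"
    using ln_mult_le_factor[OF K y] by (intro mult_left_mono add_left_mono) auto
  also have "\<dots> \<le> 2 * (1 + ln K / ln 2) * S * (ln (1 / \<delta>) + k * ln y)"
  proof -
    define c where "c = 2 * (1 + ln K / ln 2)"
    have "1 \<le> c" "0 \<le> S * ln (1 / \<delta>)"
      using K \<delta> by (auto simp: c_def)
    then have "S * ln (1 / \<delta>) + c * (S * k * ln y) \<le> c * (S * ln (1 / \<delta>)) + c * (S * k * ln y)"
      using mult_right_mono[of 1 c "S * ln (1 / \<delta>)"] by simp
    moreover have "S * (ln (1 / \<delta>) + 2 * k * ((1 + ln K / ln 2) * ln y))
        = S * ln (1 / \<delta>) + c * (S * k * ln y)"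
      by (simp add: c_def algebra_simps)
    moreover have "c * S * (ln (1 / \<delta>) + k * ln y) = c * (S * ln (1 / \<delta>)) + c * (S * k * ln y)"
      by (simp add: algebra_simps)
    ultimately show ?thesis
      unfolding c_def[symmetric] by simp
  qed
  finally show ?thesis .
qed

lemma ln_covering_number_gradPhi_le:
  fixes L W S :: nat and B \<delta> c :: real
  assumes "1 \<le> L" "real L \<le> c" "2 \<le> W" "1 \<le> B" "0 < \<delta>" "\<delta> < 1"
  defines "K \<equiv> 19 * (real CARD('d::finite) + \<bar>c\<bar> + 1)"
  shows "\<exists>n. covering_number \<delta> (gradPhi L W S B :: (real^'d \<Rightarrow> real) set) sup_dist = enat n
    \<and> ln (real n) \<le> 2 * (1 + ln K / ln 2) * S * (ln (1 / \<delta>) + 3 ^ L * ln (W * B))"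
proof -
  have K: "19 * (real CARD('d) + L + 1) \<le> K" "1 \<le> K"
    using assms(2) by (simp_all add: K_def)
  obtain n where n:
    "covering_number \<delta> (gradPhi L W S B :: (real^'d \<Rightarrow> real) set) sup_dist = enat n"
    "real n \<le> ((K * (W * B)) ^ (2 * 3 ^ L) / \<delta>) ^ S"
    using covering_number_gradPhi_le[OF assms(1) _ assms(4,5) less_imp_le[OF assms(6)] K(1),
        where W = W and S = S] assms(3) by auto
  moreover have "2 \<le> real W * B"
    using mult_mono[of 2 "real W" 1 B] assms(3,4) by simp
  ultimately show ?thesis
    using ln_le_of_le_power_div[OF n(2) K(2)] assms(5,6) by auto
qed

theorem mainTheorem18:
  shows "\<forall>c1::real. \<exists>C::real. \<forall>c2::real. \<exists>N0::real. \<forall>N\<ge>N0.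
    \<forall>(L::nat) (W::nat) (S::nat) (B::real).
      1 \<le> L \<and> real L \<le> c1 \<and> 2 \<le> W \<and> real W \<le> c2 * N \<and> 1 \<le> S \<and> real S \<le> c2 * N
      \<and> 1 \<le> B \<and> B \<le> c2 * N \<longrightarrow>
      (\<forall>\<delta>::real. 0 < \<delta> \<and> \<delta> < 1 \<longrightarrow>
        (\<exists>n::nat. covering_number \<delta> (gradPhi L W S B :: (real^'d \<Rightarrow> real) set) sup_dist = enat n
           \<and> ln (real n) \<le> C * real S * (ln (1 / \<delta>) + 3 ^ L * ln (real W * B))))"
  using ln_covering_number_gradPhi_le by blast

end
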